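(* Let $p>1$ and let $s,q,V:\mathbb{R}^3\to(0,\infty)$ be radially symmetric $C^2$-functions with one-dimensional representatives $\tilde s,\tilde q,\tilde V$. Let $\psi:[0,\infty)\times\mathbb{R}\to\mathbb{R}$ be a $C^2$-function with $\psi(0,t)=\psi''(0,t)=0$ for all $t$, where $'$ denotes $\partial/\partial r$. Then $U(x,t):=\psi(|x|,t)\frac{x}{|x|}$ (extended to $x=0$) is a $C^2(\mathbb{R}^3\times\mathbb{R})$ function, and it solves $$s(x)\partial_t^2U+\nabla\times\nabla\times U+q(x)U\pm V(x)|U|^{p-1}U=0\quad\text{on }\mathbb{R}^3\times\mathbb{R}$$ if and only if $\psi$ satisfies $$\tilde s(r)\ddot\psi+\tilde q(r)\psi\pm\tilde V(r)|\psi|^{p-1}\psi=0\quad\text{for }r\ge0,\ t\in\mathbb{R},$$ with the same choice of sign in both equations, where $\dot{}$ denotes $\partial/\partial t$.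
   Context: For a radially symmetric $C^2$-function $f:\mathbb{R}^3\to\mathbb{R}$, its one-dimensional representative $\tilde f:[0,\infty)\to\mathbb{R}$ is defined by $\tilde f(|x|)=f(x)$; it satisfies $\tilde f\in C^2([0,\infty))$, $\tilde f'(0)=0$. *)

theory Defs
  imports "HOL-Analysis.Analysis"
begin

definition C2_on :: "'a::real_normed_vector set \<Rightarrow> ('a \<Rightarrow> 'b::real_normed_vector) \<Rightarrow> bool" where
  "C2_on S f \<longleftrightarrow>
     (\<exists>(f' :: 'a \<Rightarrow> ('a \<Rightarrow>\<^sub>L 'b)) (f'' :: 'a \<Rightarrow> ('a \<Rightarrow>\<^sub>L ('a \<Rightarrow>\<^sub>L 'b))).
        (\<forall>x\<in>S. (f has_derivative blinfun_apply (f' x)) (at x within S)) \<and>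
        (\<forall>x\<in>S. (f' has_derivative blinfun_apply (f'' x)) (at x within S)) \<and>
        continuous_on S f'')"

definition pdiff :: "(real^3 \<Rightarrow> real) \<Rightarrow> 3 \<Rightarrow> real^3 \<Rightarrow> real" where
  "pdiff g i x = frechet_derivative g (at x) (axis i 1)"

definition curl :: "(real^3 \<Rightarrow> real^3) \<Rightarrow> real^3 \<Rightarrow> real^3" where
  "curl F x = vector
     [pdiff (\<lambda>y. F y $ 3) 2 x - pdiff (\<lambda>y. F y $ 2) 3 x,
      pdiff (\<lambda>y. F y $ 1) 3 x - pdiff (\<lambda>y. F y $ 3) 1 x,
      pdiff (\<lambda>y. F y $ 2) 1 x - pdiff (\<lambda>y. F y $ 1) 2 x]"

end

theory Submission
  imports Defs
begin

text \<open>Write \<open>U(x,t) = \<phi>(|x|,t) x\<close> with \<open>\<phi> = \<psi>/r\<close>. Off the axis \<open>x = 0\<close> the spatial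
  Jacobian \<open>\<phi> I + (\<phi>\<^sub>r/|x|) x x\<^sup>T\<close> is symmetric, so \<open>U\<close> is curl free, while
  \<open>\<partial>\<^sub>t\<^sup>2 U = (\<psi>\<^sub>t\<^sub>t/|x|) x\<close>; hence the vector equation at \<open>(x,t)\<close> is the radial
  equation at \<open>(|x|,t)\<close> multiplied by \<open>x/|x|\<close>.

  Regularity on the axis: as \<open>\<psi>(0,t) = \<psi>\<^sub>r\<^sub>r(0,t) = 0\<close>, Taylor's formula gives
  \<open>\<psi> - r\<psi>\<^sub>r = o(r\<^sup>2)\<close> and \<open>\<psi>\<^sub>t = r\<psi>\<^sub>r\<^sub>t(0,t) + o(r)\<close>, so \<open>\<phi>\<close>, \<open>\<phi>\<^sub>r\<close> and \<open>\<phi>\<^sub>t\<close> have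
  limits on the axis and the first and second derivatives of \<open>U\<close> computed off the axis extend
  continuously to it. A map that is continuous up to a hyperplane and whose derivative off the
  hyperplane has a limit there is differentiable there, with that limit as derivative.\<close>

lemma differentiable_bound_segment_limit_start:
  fixes g :: "'a::real_normed_vector \<Rightarrow> 'b::real_normed_vector"
  assumes deriv: "\<And>u. 0 < u \<Longrightarrow> u \<le> 1 \<Longrightarrow>
      (g has_derivative g' (a + u *\<^sub>R (z - a))) (at (a + u *\<^sub>R (z - a)))"
    and bound: "\<And>u. 0 < u \<Longrightarrow> u \<le> 1 \<Longrightarrow> onorm (g' (a + u *\<^sub>R (z - a))) \<le> B"
    and start: "((\<lambda>u. g (a + u *\<^sub>R (z - a))) \<longlongrightarrow> g a) (at_right 0)"
  shows "norm (g z - g a) \<le> B * norm (z - a)"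
proof -
  have B: "0 \<le> B"
    using bound[of 1] onorm_pos_le[OF has_derivative_bounded_linear[OF deriv[of 1]]] by simp
  have tail: "norm (g z - g (a + s *\<^sub>R (z - a))) \<le> B * norm (z - a)" if s: "0 < s" "s \<le> 1" for s
  proof -
    let ?w = "a + s *\<^sub>R (z - a)"
    let ?G = "{y. \<exists>u\<in>{s..1}. y = a + u *\<^sub>R (z - a)}"
    have reparam: "?w + t *\<^sub>R (z - ?w) = a + (s + t * (1 - s)) *\<^sub>R (z - a)"
      and range: "s \<le> s + t * (1 - s)" "s + t * (1 - s) \<le> 1" if "t \<in> {0..1}" for t
      using that s mult_nonneg_nonneg[of t "1 - s"] mult_nonneg_nonneg[of "1 - t" "1 - s"]
      by (auto simp: algebra_simps)
    have "norm (g (?w + (z - ?w)) - g ?w) \<le> norm (z - ?w) * B"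
    proof (rule differentiable_bound_segment[where G = ?G])
      show "?w + t *\<^sub>R (z - ?w) \<in> ?G" if "t \<in> {0..1}" for t
        using reparam[OF that] range[OF that]
        by (intro CollectI bexI[of _ "s + t * (1 - s)"]) simp_all
      show "(g has_derivative g' y) (at y within ?G)" if "y \<in> ?G" for y
      proof -
        from that obtain u where u: "s \<le> u" "u \<le> 1" and y: "y = a + u *\<^sub>R (z - a)" by auto
        have "(g has_derivative g' y) (at y)" unfolding y using s u by (intro deriv) auto
        then show ?thesis by (rule has_derivative_at_withinI)
      qed
      show "onorm (g' (?w + t *\<^sub>R (z - ?w))) \<le> B" if "t \<in> {0..1}" for t
        unfolding reparam[OF that] using range[OF that] s by (intro bound) auto
    qed
    then have "norm (g z - g ?w) \<le> norm (z - ?w) * B" by simp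
    also have "z - ?w = (1 - s) *\<^sub>R (z - a)" by (simp add: algebra_simps)
    also have "norm \<dots> * B = (1 - s) * norm (z - a) * B" using s by simp
    also have "\<dots> \<le> B * norm (z - a)" using s B by (simp add: mult_left_le_one_le mult.commute[of _ B] mult_left_mono)
    finally show ?thesis .
  qed
  have "((\<lambda>u. norm (g z - g (a + u *\<^sub>R (z - a)))) \<longlongrightarrow> norm (g z - g a)) (at_right 0)"
    using start by (intro tendsto_intros)
  moreover have "\<forall>\<^sub>F u in at_right 0. norm (g z - g (a + u *\<^sub>R (z - a))) \<le> B * norm (z - a)"
    unfolding eventually_at_right[OF zero_less_one] using tail by (intro exI[of _ 1]) (simp add: less_imp_le)
  ultimately show ?thesis by (rule tendsto_upperbound) simp
qed

lemma norm_diff_le_extend_to_hyperplane: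
  fixes g :: "'a::euclidean_space \<times> 'b::real_normed_vector \<Rightarrow> 'c::real_normed_vector"
  assumes near: "\<And>z. fst z \<noteq> 0 \<Longrightarrow> norm (z - a) < d \<Longrightarrow> norm (g z - g a) \<le> e * norm (z - a)"
    and cont: "fst y = 0 \<Longrightarrow> (g \<longlongrightarrow> g y) (at y within {z. fst z \<noteq> 0})"
    and y: "norm (y - a) < d"
  shows "norm (g y - g a) \<le> e * norm (y - a)"
proof (cases "fst y = 0")
  case False then show ?thesis using near y by simp
next
  case True
  let ?G = "{z. fst z \<noteq> 0}"
  obtain b :: 'a where b: "b \<in> Basis" using nonempty_Basis by blast
  define v where "v s = (s *\<^sub>R b, snd y)" for s :: real
  have v_lim: "(v \<longlongrightarrow> y) (at_right 0)"
    unfolding v_def using True by (cases y) (auto intro!: tendsto_eq_intros)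
  have v_G: "\<forall>\<^sub>F s in at_right 0. v s \<in> ?G - {y}"
    using eventually_at_right_less[of 0]
    by eventually_elim (use b True in \<open>auto simp: v_def nonzero_Basis prod_eq_iff\<close>)
  have "filterlim v (at y within ?G) (at_right 0)"
    using v_G by (intro filterlim_at_withinI v_lim)
  from filterlim_compose[OF cont[OF True] this]
  have "((\<lambda>s. norm (g (v s) - g a)) \<longlongrightarrow> norm (g y - g a)) (at_right 0)"
    by (intro tendsto_intros) (simp add: o_def)
  moreover have "((\<lambda>s. e * norm (v s - a)) \<longlongrightarrow> e * norm (y - a)) (at_right 0)"
    using v_lim by (intro tendsto_intros)
  moreover have "\<forall>\<^sub>F s in at_right 0. norm (v s - a) < d"
    using y by (intro order_tendstoD(2)[OF tendsto_norm[OF tendsto_diff[OF v_lim tendsto_const]]])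
  with v_G have "\<forall>\<^sub>F s in at_right 0. norm (g (v s) - g a) \<le> e * norm (v s - a)"
    by eventually_elim (simp add: near)
  ultimately show ?thesis by (intro tendsto_le[OF trivial_limit_at_right_real])
qed

lemma has_derivative_across_hyperplane:
  fixes f :: "'a::euclidean_space \<times> 'b::real_normed_vector \<Rightarrow> 'c::real_normed_vector"
  assumes der: "\<And>z. fst z \<noteq> 0 \<Longrightarrow> (f has_derivative blinfun_apply (F z)) (at z)"
    and lim: "(F \<longlongrightarrow> L) (at a within {z. fst z \<noteq> 0})"
    and cont: "\<And>b. fst b = 0 \<Longrightarrow> (f \<longlongrightarrow> f b) (at b within {z. fst z \<noteq> 0})"
    and a: "fst a = 0"
  shows "(f has_derivative blinfun_apply L) (at a)"
  unfolding has_derivative_at_alt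
proof (intro conjI allI impI blinfun.bounded_linear_right)
  let ?G = "{z. fst z \<noteq> 0}"
  fix e :: real assume "e > 0"
  from lim[THEN tendstoD, OF this] obtain d where "d > 0"
    and close: "\<And>z. z \<in> ?G \<Longrightarrow> z \<noteq> a \<Longrightarrow> dist z a < d \<Longrightarrow> dist (F z) L < e"
    unfolding eventually_at by auto
  define g where "g y = f y - L y" for y
  have g_cont: "(g \<longlongrightarrow> g b) (at b within ?G)" if "fst b = 0" for b
    unfolding g_def using cont[OF that]
    by (intro tendsto_diff blinfun.tendsto tendsto_const) auto
  have near: "norm (g z - g a) \<le> e * norm (z - a)" if z: "fst z \<noteq> 0" "norm (z - a) < d" for z
  proof (rule differentiable_bound_segment_limit_start[where g' = "\<lambda>y. blinfun_apply (F y - L)"])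
    fix u :: real assume u: "0 < u" "u \<le> 1"
    let ?p = "a + u *\<^sub>R (z - a)"
    have p: "fst ?p \<noteq> 0" using z a u by simp
    then show "(g has_derivative blinfun_apply (F ?p - L)) (at ?p)"
      unfolding g_def blinfun.diff_left
      by (intro has_derivative_diff der bounded_linear_imp_has_derivative blinfun.bounded_linear_right)
    have "dist ?p a = u * norm (z - a)" using u by (simp add: dist_norm)
    also have "\<dots> \<le> norm (z - a)" using u by (simp add: mult_left_le_one_le)
    also have "\<dots> < d" by (rule z(2))
    finally have "dist (F ?p) L < e" using p a by (intro close) auto
    then show "onorm (blinfun_apply (F ?p - L)) \<le> e"
      by (simp add: norm_blinfun.rep_eq[symmetric] dist_norm)
  next
    have "filterlim (\<lambda>u. a + u *\<^sub>R (z - a)) (at a within ?G) (at_right 0)"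
    proof (rule filterlim_at_withinI)
      show "((\<lambda>u. a + u *\<^sub>R (z - a)) \<longlongrightarrow> a) (at_right 0)"
        by (auto intro!: tendsto_eq_intros)
      show "\<forall>\<^sub>F u in at_right 0. a + u *\<^sub>R (z - a) \<in> ?G - {a}"
        using eventually_at_right_less[of 0] by eventually_elim (use z a in simp)
    qed
    from filterlim_compose[OF g_cont[OF a] this]
    show "((\<lambda>u. g (a + u *\<^sub>R (z - a))) \<longlongrightarrow> g a) (at_right 0)" by (simp add: o_def)
  qed
  have "norm (f y - f a - L (y - a)) \<le> e * norm (y - a)" if "norm (y - a) < d" for y
    using norm_diff_le_extend_to_hyperplane[OF near g_cont that]
    by (simp add: g_def blinfun.diff_right algebra_simps)
  with \<open>d > 0\<close> show "\<exists>d>0. \<forall>y. norm (y - a) < d \<longrightarrow> norm (f y - f a - L (y - a)) \<le> e * norm (y - a)"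
    by blast
qed

lemma blinfun_apply_pair:
  fixes B :: "(real \<times> real) \<Rightarrow>\<^sub>L 'a::real_normed_vector"
  shows "B (a, b) = a *\<^sub>R B (1, 0) + b *\<^sub>R B (0, 1)"
proof -
  have "(a, b) = a *\<^sub>R (1, 0) + b *\<^sub>R (0::real, 1::real)" by simp
  then show ?thesis by (simp only: blinfun.add_right[symmetric] blinfun.scaleR_right[symmetric])
qed

lemma has_real_derivative_partial_fst:
  fixes \<Phi> :: "real \<times> real \<Rightarrow> real"
  assumes der: "(\<Phi> has_derivative \<Phi>') (at (u, t) within S \<times> T)" and "t \<in> T"
  shows "((\<lambda>s. \<Phi> (s, t)) has_real_derivative \<Phi>' (1, 0)) (at u within S)"
proof -
  have "((\<lambda>s. (s, t)) has_derivative (\<lambda>h. (h, 0))) (at u within S)"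
    by (auto intro!: derivative_eq_intros)
  moreover have "(\<Phi> has_derivative \<Phi>') (at (u, t) within (\<lambda>s. (s, t)) ` S)"
    using \<open>t \<in> T\<close> by (intro has_derivative_subset[OF der]) auto
  ultimately have "((\<lambda>s. \<Phi> (s, t)) has_derivative (\<lambda>h. \<Phi>' (h, 0))) (at u within S)"
    by (rule has_derivative_in_compose)
  moreover have "(\<lambda>h. \<Phi>' (h, 0)) = (*) (\<Phi>' (1, 0))"
  proof
    fix h :: real
    have "\<Phi>' (h, 0) = \<Phi>' (h *\<^sub>R (1, 0))" by simp
    also have "\<dots> = h * \<Phi>' (1, 0)"
      using linear_scale[OF has_derivative_linear[OF der], of h "(1, 0)"] by simp
    finally show "\<Phi>' (h, 0) = \<Phi>' (1, 0) * h" by simp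
  qed
  ultimately show ?thesis by (simp add: has_field_derivative_def)
qed

lemma has_real_derivative_partial_snd:
  fixes \<Phi> :: "real \<times> real \<Rightarrow> real"
  assumes der: "(\<Phi> has_derivative \<Phi>') (at (u, t) within S \<times> T)" and "u \<in> S"
  shows "((\<lambda>s. \<Phi> (u, s)) has_real_derivative \<Phi>' (0, 1)) (at t within T)"
proof -
  have "((\<lambda>s. (u, s)) has_derivative (\<lambda>h. (0, h))) (at t within T)"
    by (auto intro!: derivative_eq_intros)
  moreover have "(\<Phi> has_derivative \<Phi>') (at (u, t) within (\<lambda>s. (u, s)) ` T)"
    using \<open>u \<in> S\<close> by (intro has_derivative_subset[OF der]) auto
  ultimately have "((\<lambda>s. \<Phi> (u, s)) has_derivative (\<lambda>h. \<Phi>' (0, h))) (at t within T)"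
    by (rule has_derivative_in_compose)
  moreover have "(\<lambda>h. \<Phi>' (0, h)) = (*) (\<Phi>' (0, 1))"
  proof
    fix h :: real
    have "\<Phi>' (0, h) = \<Phi>' (h *\<^sub>R (0, 1))" by simp
    also have "\<dots> = h * \<Phi>' (0, 1)"
      using linear_scale[OF has_derivative_linear[OF der], of h "(0, 1)"] by simp
    finally show "\<Phi>' (0, h) = \<Phi>' (0, 1) * h" by simp
  qed
  ultimately show ?thesis by (simp add: has_field_derivative_def)
qed

lemma DERIV_abs_le_local_lipschitz:
  fixes \<phi> :: "real \<Rightarrow> real"
  assumes der: "(\<phi> has_real_derivative D) (at t)"
    and lipschitz: "\<forall>\<^sub>F s in at t. \<bar>\<phi> s - \<phi> t\<bar> \<le> L * \<bar>s - t\<bar>"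
  shows "\<bar>D\<bar> \<le> L"
proof -
  have "((\<lambda>s. \<bar>(\<phi> s - \<phi> t) / (s - t)\<bar>) \<longlongrightarrow> \<bar>D\<bar>) (at t)"
    using der unfolding has_field_derivative_iff by (rule tendsto_rabs)
  moreover have "\<forall>\<^sub>F s in at t. \<bar>(\<phi> s - \<phi> t) / (s - t)\<bar> \<le> L"
    using lipschitz eventually_neq_at_within[of t t UNIV]
    by eventually_elim (simp add: abs_divide divide_le_eq)
  ultimately show ?thesis by (intro tendsto_upperbound) auto
qed

lemma dist_segment_less:
  fixes u r s t t' t0 d :: real
  assumes "0 \<le> u" "u \<le> r" "s \<in> closed_segment t t'"
    and "dist (r, t) (0, t0) < d" "dist (r, t') (0, t0) < d"
  shows "dist (u, s) (0, t0) < d"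
proof -
  have "\<bar>s - t0\<bar> \<le> \<bar>t - t0\<bar> \<or> \<bar>s - t0\<bar> \<le> \<bar>t' - t0\<bar>"
    using assms(3) by (auto simp: closed_segment_eq_real_ivl split: if_splits)
  then have "(s - t0)\<^sup>2 \<le> (t - t0)\<^sup>2 \<or> (s - t0)\<^sup>2 \<le> (t' - t0)\<^sup>2"
    by (metis abs_ge_zero power2_abs power_mono)
  moreover have "u\<^sup>2 \<le> r\<^sup>2" using assms(1,2) by (simp add: power_mono)
  ultimately have "u\<^sup>2 + (s - t0)\<^sup>2 \<le> r\<^sup>2 + (t - t0)\<^sup>2 \<or> u\<^sup>2 + (s - t0)\<^sup>2 \<le> r\<^sup>2 + (t' - t0)\<^sup>2"
    by auto
  then have "sqrt (u\<^sup>2 + (s - t0)\<^sup>2) \<le> sqrt (r\<^sup>2 + (t - t0)\<^sup>2)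
      \<or> sqrt (u\<^sup>2 + (s - t0)\<^sup>2) \<le> sqrt (r\<^sup>2 + (t' - t0)\<^sup>2)"
    using real_sqrt_le_mono by blast
  moreover have "sqrt (r\<^sup>2 + (t - t0)\<^sup>2) < d" "sqrt (r\<^sup>2 + (t' - t0)\<^sup>2) < d"
    using assms(4,5) by (simp_all add: dist_Pair_Pair dist_real_def power2_abs)
  ultimately have "sqrt (u\<^sup>2 + (s - t0)\<^sup>2) < d" by linarith
  then show ?thesis by (simp add: dist_Pair_Pair dist_real_def power2_abs)
qed

lemma dist_shrink_fst_less:
  fixes u r t t0 d :: real
  assumes "0 \<le> u" "u \<le> r" "dist (r, t) (0, t0) < d"
  shows "dist (u, t) (0, t0) < d"
  using dist_segment_less[OF assms(1,2), of t t] assms(3) by simp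

lemma at_within_atLeast_neq_bot:
  assumes "0 \<le> (r::real)"
  shows "at r within {0..} \<noteq> bot"
proof
  assume "at r within {0..} = bot"
  moreover have "at_right r \<le> at r within {0..}" using assms by (intro at_le) auto
  ultimately show False using trivial_limit_at_right_real[of r] by (simp add: bot_unique)
qed

lemma sgn_bounds:
  fixes x y :: "'a::real_inner"
  assumes "x \<noteq> 0"
  shows "norm (sgn x) = 1" and "\<bar>sgn x \<bullet> y\<bar> \<le> norm y" and "\<bar>y \<bullet> sgn x\<bar> \<le> norm y"
  using assms Cauchy_Schwarz_ineq2[of "sgn x" y] by (simp_all add: norm_sgn inner_commute)

lemma norm_scaleR_sgn_le:
  fixes x :: "'a::real_inner"
  assumes "x \<noteq> 0" "\<bar>a\<bar> \<le> A" "\<bar>b\<bar> \<le> B"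
  shows "norm ((a * b) *\<^sub>R sgn x) \<le> A * B"
  using assms by (simp add: sgn_bounds abs_mult mult_mono')

lemma norm_sgn_combination_le:
  fixes x v w :: "'a::real_inner"
  assumes "x \<noteq> 0"
  shows "norm ((sgn x \<bullet> v) *\<^sub>R w + (w \<bullet> v) *\<^sub>R sgn x + (w \<bullet> sgn x) *\<^sub>R v) \<le> 3 * (norm v * norm w)"
proof -
  have "norm ((sgn x \<bullet> v) *\<^sub>R w + (w \<bullet> v) *\<^sub>R sgn x + (w \<bullet> sgn x) *\<^sub>R v)
      \<le> norm v * norm w + norm w * norm v + norm w * norm v"
    using assms by (intro norm_triangle_le add_mono)
      (simp_all add: sgn_bounds Cauchy_Schwarz_ineq2 mult_right_mono)
  then show ?thesis by simp
qed

definition fst_outer :: "'a::real_inner \<Rightarrow> 'c::real_normed_vector \<Rightarrow> ('a \<times> 'b::real_normed_vector) \<Rightarrow>\<^sub>L 'c"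
  where "fst_outer y x = blinfun_scaleR_left x o\<^sub>L blinfun_inner_left y o\<^sub>L fst_blinfun"

lemma fst_outer_apply [simp]: "blinfun_apply (fst_outer y x) v = (fst v \<bullet> y) *\<^sub>R x"
  by (simp add: fst_outer_def)

definition snd_outer :: "'c::real_normed_vector \<Rightarrow> ('a::real_normed_vector \<times> real) \<Rightarrow>\<^sub>L 'c"
  where "snd_outer x = blinfun_scaleR_left x o\<^sub>L snd_blinfun"

lemma snd_outer_apply [simp]: "blinfun_apply (snd_outer x) v = snd v *\<^sub>R x"
  by (simp add: snd_outer_def)

lemma bounded_bilinear_fst_outer:
  "bounded_bilinear (fst_outer :: 'a::real_inner \<Rightarrow> 'c::real_normed_vector \<Rightarrow> ('a \<times> 'b::real_normed_vector) \<Rightarrow>\<^sub>L 'c)"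
proof
  fix a a' :: 'a and b b' :: 'c and r :: real
  show "fst_outer (a + a') b = fst_outer a b + fst_outer a' b"
    by (rule blinfun_eqI) (simp add: inner_add_right scaleR_add_left blinfun.add_left)
  show "fst_outer a (b + b') = fst_outer a b + fst_outer a b'"
    by (rule blinfun_eqI) (simp add: scaleR_add_right blinfun.add_left)
  show "fst_outer (r *\<^sub>R a) b = r *\<^sub>R fst_outer a b"
    by (rule blinfun_eqI) (simp add: blinfun.scaleR_left)
  show "fst_outer a (r *\<^sub>R b) = r *\<^sub>R fst_outer a b"
    by (rule blinfun_eqI) (simp add: blinfun.scaleR_left)
next
  have "norm (fst_outer a b :: ('a \<times> 'b) \<Rightarrow>\<^sub>L 'c) \<le> norm a * norm b" for a :: 'a and b :: 'c
  proof (rule norm_blinfun_bound)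
    fix v :: "'a \<times> 'b"
    have "norm (fst_outer a b v) \<le> (norm (fst v) * norm a) * norm b"
      by (simp add: mult_right_mono Cauchy_Schwarz_ineq2)
    also have "\<dots> \<le> norm a * norm b * norm v"
      using norm_fst_le[of "fst v" "snd v"] by (simp add: mult_left_mono mult.commute mult.left_commute)
    finally show "norm (fst_outer a b v) \<le> norm a * norm b * norm v" .
  qed simp
  then show "\<exists>K. \<forall>a b. norm (fst_outer a b :: ('a \<times> 'b) \<Rightarrow>\<^sub>L 'c) \<le> norm a * norm b * K"
    by (intro exI[of _ 1]) simp
qed

lemma bounded_linear_snd_outer:
  "bounded_linear (snd_outer :: 'c::real_normed_vector \<Rightarrow> ('a::real_normed_vector \<times> real) \<Rightarrow>\<^sub>L 'c)"
proof
  fix b b' :: 'c and r :: real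
  show "snd_outer (b + b') = snd_outer b + snd_outer b'"
    by (rule blinfun_eqI) (simp add: scaleR_add_right blinfun.add_left)
  show "snd_outer (r *\<^sub>R b) = r *\<^sub>R snd_outer b"
    by (rule blinfun_eqI) (simp add: blinfun.scaleR_left)
next
  have "norm (snd_outer b :: ('a \<times> real) \<Rightarrow>\<^sub>L 'c) \<le> norm b" for b :: 'c
  proof (rule norm_blinfun_bound)
    fix v :: "'a \<times> real"
    show "norm (snd_outer b v) \<le> norm b * norm v"
      using norm_snd_le[of "snd v" "fst v"] by (simp add: mult.commute mult_left_mono)
  qed simp
  then show "\<exists>K. \<forall>b. norm (snd_outer b :: ('a \<times> real) \<Rightarrow>\<^sub>L 'c) \<le> norm b * K"
    by (intro exI[of _ 1]) simp
qed

lemma tendsto_scaleR_zero_bounded: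
  fixes g :: "'a \<Rightarrow> 'b::real_normed_vector"
  assumes "(f \<longlongrightarrow> 0) F" and "\<forall>\<^sub>F x in F. norm (g x) \<le> K"
  shows "((\<lambda>x. f x *\<^sub>R g x) \<longlongrightarrow> 0) F"
  using assms(2) by (intro tendsto_0_le[OF assms(1), of _ K]) (auto elim!: eventually_mono intro: mult_left_mono)

lemma pdiff_component:
  assumes "(F has_derivative D) (at x)"
  shows "pdiff (\<lambda>y. F y $ k) j x = D (axis j 1) $ k"
proof -
  have "((\<lambda>y. F y $ k) has_derivative (\<lambda>h. D h $ k)) (at x)"
    by (rule bounded_linear.has_derivative[OF bounded_linear_vec_nth assms])
  from frechet_derivative_at[OF this] show ?thesis unfolding pdiff_def by (metis (no_types))
qed

lemma curl_eq_0_if_symmetric_derivative: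
  assumes "(F has_derivative D) (at x)" and "\<And>j k. D (axis j 1) $ k = D (axis k 1) $ j"
  shows "curl F x = 0"
  unfolding curl_def pdiff_component[OF assms(1)]
  by (simp add: vec_eq_iff forall_3 assms(2)[of 3 2] assms(2)[of 3 1] assms(2)[of 2 1])

lemma radial_field_eq_0_iff:
  fixes E :: "real \<Rightarrow> 'b \<Rightarrow> real"
  assumes "\<And>t. E 0 t = 0"
  shows "(\<forall>(x::'a::euclidean_space) t. (E (norm x) t / norm x) *\<^sub>R x = 0) \<longleftrightarrow> (\<forall>r t. 0 \<le> r \<longrightarrow> E r t = 0)"
proof
  assume vanish: "\<forall>(x::'a) t. (E (norm x) t / norm x) *\<^sub>R x = 0"
  show "\<forall>r t. 0 \<le> r \<longrightarrow> E r t = 0"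
  proof (intro allI impI)
    fix r :: real and t assume "0 \<le> r"
    obtain b :: 'a where "b \<in> Basis" using nonempty_Basis by blast
    then have "norm (r *\<^sub>R b) = r" "b \<noteq> 0" using \<open>0 \<le> r\<close> by (auto simp: nonzero_Basis)
    with vanish[rule_format, of "r *\<^sub>R b" t] assms show "E r t = 0"
      by (cases "r = 0") auto
  qed
qed (use assms in auto)

section \<open>Functions of class \<open>C\<^sup>2\<close> on the half-plane \<open>r \<ge> 0\<close>\<close>

locale half_plane_C2 =
  fixes \<psi> :: "real \<Rightarrow> real \<Rightarrow> real"
    and Dpsi :: "real \<times> real \<Rightarrow> ((real \<times> real) \<Rightarrow>\<^sub>L real)"
    and D2psi :: "real \<times> real \<Rightarrow> ((real \<times> real) \<Rightarrow>\<^sub>L ((real \<times> real) \<Rightarrow>\<^sub>L real))"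
  assumes has_derivative_psi: "\<And>z. z \<in> {0..} \<times> UNIV \<Longrightarrow>
      ((\<lambda>(r, t). \<psi> r t) has_derivative blinfun_apply (Dpsi z)) (at z within {0..} \<times> UNIV)"
    and has_derivative_Dpsi: "\<And>z. z \<in> {0..} \<times> UNIV \<Longrightarrow>
      (Dpsi has_derivative blinfun_apply (D2psi z)) (at z within {0..} \<times> UNIV)"
    and continuous_D2psi: "continuous_on ({0..} \<times> UNIV) D2psi"
begin

text \<open>The last index is the direction of the outer differentiation: \<open>psi_rt\<close> is the
  \<open>t\<close>-derivative of \<open>psi_r\<close>.\<close>

definition "psi_r z = Dpsi z (1, 0)"
definition "psi_t z = Dpsi z (0, 1)"
definition "psi_rr z = D2psi z (1, 0) (1, 0)"
definition "psi_rt z = D2psi z (0, 1) (1, 0)"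
definition "psi_tr z = D2psi z (1, 0) (0, 1)"
definition "psi_tt z = D2psi z (0, 1) (0, 1)"

lemma Dpsi_apply: "blinfun_apply (Dpsi w) (a, b) = a * psi_r w + b * psi_t w"
  unfolding psi_r_def psi_t_def by (subst blinfun_apply_pair) simp

lemma D2psi_apply_r: "blinfun_apply (blinfun_apply (D2psi w) (a, b)) (1, 0) = a * psi_rr w + b * psi_rt w"
  unfolding psi_rr_def psi_rt_def by (subst blinfun_apply_pair) (simp add: blinfun.scaleR_left blinfun.add_left)

lemma D2psi_apply_t: "blinfun_apply (blinfun_apply (D2psi w) (a, b)) (0, 1) = a * psi_tr w + b * psi_tt w"
  unfolding psi_tr_def psi_tt_def by (subst blinfun_apply_pair) (simp add: blinfun.scaleR_left blinfun.add_left)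

lemma psi_r_has_derivative: "z \<in> {0..} \<times> UNIV \<Longrightarrow>
    (psi_r has_derivative (\<lambda>v. D2psi z v (1, 0))) (at z within {0..} \<times> UNIV)"
  unfolding psi_r_def[abs_def] by (rule blinfun.FDERIV[OF has_derivative_Dpsi has_derivative_const, simplified])

lemma psi_t_has_derivative: "z \<in> {0..} \<times> UNIV \<Longrightarrow>
    (psi_t has_derivative (\<lambda>v. D2psi z v (0, 1))) (at z within {0..} \<times> UNIV)"
  unfolding psi_t_def[abs_def] by (rule blinfun.FDERIV[OF has_derivative_Dpsi has_derivative_const, simplified])

lemma psi_has_derivative_r: "u \<ge> 0 \<Longrightarrow> ((\<lambda>u. \<psi> u t) has_real_derivative psi_r (u, t)) (at u within {0..})"
  unfolding psi_r_def using has_real_derivative_partial_fst[OF has_derivative_psi[of "(u, t)"]] by simp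

lemma psi_r_has_derivative_r: "u \<ge> 0 \<Longrightarrow> ((\<lambda>u. psi_r (u, t)) has_real_derivative psi_rr (u, t)) (at u within {0..})"
  unfolding psi_rr_def using has_real_derivative_partial_fst[OF psi_r_has_derivative[of "(u, t)"]] by simp

lemma psi_t_has_derivative_r: "u \<ge> 0 \<Longrightarrow> ((\<lambda>u. psi_t (u, t)) has_real_derivative psi_tr (u, t)) (at u within {0..})"
  unfolding psi_tr_def using has_real_derivative_partial_fst[OF psi_t_has_derivative[of "(u, t)"]] by simp

lemma psi_has_derivative_t: "u \<ge> 0 \<Longrightarrow> ((\<lambda>t. \<psi> u t) has_real_derivative psi_t (u, t)) (at t)"
  unfolding psi_t_def using has_real_derivative_partial_snd[OF has_derivative_psi[of "(u, t)"]] by simp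

lemma psi_r_has_derivative_t: "u \<ge> 0 \<Longrightarrow> ((\<lambda>t. psi_r (u, t)) has_real_derivative psi_rt (u, t)) (at t)"
  unfolding psi_rt_def using has_real_derivative_partial_snd[OF psi_r_has_derivative[of "(u, t)"]] by simp

lemma psi_t_has_derivative_t: "u \<ge> 0 \<Longrightarrow> ((\<lambda>t. psi_t (u, t)) has_real_derivative psi_tt (u, t)) (at t)"
  unfolding psi_tt_def using has_real_derivative_partial_snd[OF psi_t_has_derivative[of "(u, t)"]] by simp

lemma deriv_deriv_psi: "0 \<le> r \<Longrightarrow> deriv (\<lambda>\<tau>. deriv (\<lambda>\<tau>'. \<psi> r \<tau>') \<tau>) t = psi_tt (r, t)"
proof -
  assume r: "0 \<le> r"
  have "(\<lambda>\<tau>. deriv (\<lambda>\<tau>'. \<psi> r \<tau>') \<tau>) = (\<lambda>\<tau>. psi_t (r, \<tau>))"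
    using psi_has_derivative_t[OF r] by (auto intro: DERIV_imp_deriv)
  then show ?thesis using psi_t_has_derivative_t[OF r] by (simp add: DERIV_imp_deriv)
qed

lemma psi_rr_eq_vector_derivative:
  "vector_derivative (\<lambda>r. vector_derivative (\<lambda>\<rho>. \<psi> \<rho> t) (at r within {0..})) (at 0 within {0..})
     = psi_rr (0, t)"
proof -
  have psi_r_eq: "vector_derivative (\<lambda>\<rho>. \<psi> \<rho> t) (at r within {0..}) = psi_r (r, t)" if "0 \<le> r" for r
    using psi_has_derivative_r[OF that, of t] that
    by (intro vector_derivative_within at_within_atLeast_neq_bot)
      (auto simp: has_real_derivative_iff_has_vector_derivative)
  have "((\<lambda>r. vector_derivative (\<lambda>\<rho>. \<psi> \<rho> t) (at r within {0..})) has_real_derivative psi_rr (0, t))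
      (at 0 within {0..})"
    by (rule has_field_derivative_transform_within[OF psi_r_has_derivative_r[of 0 t] zero_less_one])
      (auto simp: psi_r_eq)
  then show ?thesis
    by (intro vector_derivative_within at_within_atLeast_neq_bot)
      (auto simp: has_real_derivative_iff_has_vector_derivative)
qed

definition D2psi_close :: "real \<Rightarrow> real \<Rightarrow> real \<Rightarrow> bool" where
  "D2psi_close t0 d e \<longleftrightarrow> (\<forall>w \<in> {0..} \<times> UNIV. dist w (0, t0) < d \<longrightarrow>
     (\<forall>v1 v2. norm (D2psi w v1 v2 - D2psi (0, t0) v1 v2) \<le> e * norm v1 * norm v2))"

lemma D2psi_closeD:
  assumes "D2psi_close t0 d e" "0 \<le> fst w" "dist w (0, t0) < d"
  shows "norm (D2psi w v1 v2 - D2psi (0, t0) v1 v2) \<le> e * norm v1 * norm v2"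
proof -
  have "w \<in> {0..} \<times> UNIV" using assms(2) by (simp add: mem_Times_iff)
  with assms(1,3) show ?thesis unfolding D2psi_close_def by blast
qed

lemma D2psi_close_exists:
  assumes "e > 0"
  obtains d where "d > 0" and "D2psi_close t0 d e"
proof -
  have "(0::real, t0) \<in> {0..} \<times> UNIV" by simp
  from continuous_D2psi[unfolded continuous_on_iff, rule_format, OF this \<open>e > 0\<close>] obtain d where
    "d > 0" and d: "\<And>w. w \<in> {0..} \<times> UNIV \<Longrightarrow> dist w (0, t0) < d \<Longrightarrow> dist (D2psi w) (D2psi (0, t0)) < e"
    by auto
  moreover have "norm (D2psi w v1 v2 - D2psi (0, t0) v1 v2) \<le> e * norm v1 * norm v2"
    if w: "w \<in> {0..} \<times> UNIV" "dist w (0, t0) < d" for w v1 v2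
  proof -
    have "norm (D2psi w v1 v2 - D2psi (0, t0) v1 v2) = norm ((D2psi w - D2psi (0, t0)) v1 v2)"
      by (simp add: blinfun.diff_left)
    also have "\<dots> \<le> norm (D2psi w - D2psi (0, t0)) * norm v1 * norm v2"
      by (intro order_trans[OF norm_blinfun] mult_right_mono norm_blinfun) auto
    also have "\<dots> \<le> e * norm v1 * norm v2"
      using d[OF w] by (intro mult_right_mono) (auto simp: dist_norm)
    finally show ?thesis .
  qed
  ultimately show ?thesis using that by (auto simp: D2psi_close_def)
qed

lemma at_within_half_plane: "0 < fst w \<Longrightarrow> at w within {0::real..} \<times> (UNIV::real set) = at w"
  by (rule at_within_interior) (cases w, auto simp: interior_Times)

lemma has_derivative_psi_at: "0 < fst w \<Longrightarrow>
    ((\<lambda>w. \<psi> (fst w) (snd w)) has_derivative blinfun_apply (Dpsi w)) (at w)"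
  using has_derivative_psi[of w] at_within_half_plane[of w] by (cases w) (auto simp: split_beta')

lemma psi_r_has_derivative_at: "0 < fst w \<Longrightarrow> (psi_r has_derivative (\<lambda>v. D2psi w v (1, 0))) (at w)"
  using psi_r_has_derivative[of w] at_within_half_plane[of w] by (cases w) auto

lemma psi_t_has_derivative_at: "0 < fst w \<Longrightarrow> (psi_t has_derivative (\<lambda>v. D2psi w v (0, 1))) (at w)"
  using psi_t_has_derivative[of w] at_within_half_plane[of w] by (cases w) auto

lemma isCont_D2psi: "0 < fst w \<Longrightarrow> isCont D2psi w"
  using continuous_D2psi at_within_half_plane[of w] unfolding continuous_on_def isCont_def
  by (cases w) (metis SigmaI UNIV_I atLeast_iff less_imp_le fst_conv)

lemma isCont_psi_rr: "0 < fst w \<Longrightarrow> isCont psi_rr w"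
  and isCont_psi_rt: "0 < fst w \<Longrightarrow> isCont psi_rt w"
  and isCont_psi_tr: "0 < fst w \<Longrightarrow> isCont psi_tr w"
  and isCont_psi_tt: "0 < fst w \<Longrightarrow> isCont psi_tt w"
  unfolding psi_rr_def[abs_def] psi_rt_def[abs_def] psi_tr_def[abs_def] psi_tt_def[abs_def]
  using isCont_D2psi[of w] by (auto intro!: continuous_intros)

lemma isCont_psi_rt_axis: "isCont (\<lambda>s. psi_rt (0, s)) t"
proof -
  have "continuous_on UNIV (\<lambda>s. D2psi (0, s))"
    by (rule continuous_on_compose2[OF continuous_D2psi]) (auto intro!: continuous_intros)
  then have "continuous_on UNIV (\<lambda>s. psi_rt (0, s))"
    unfolding psi_rt_def by (intro continuous_intros)
  then show ?thesis by (simp add: continuous_on_eq_continuous_at)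
qed

lemma D2psi_tendsto: "(D2psi \<longlongrightarrow> D2psi (0, t0)) (at (0, t0) within {0<..} \<times> UNIV)"
proof -
  have "(D2psi \<longlongrightarrow> D2psi (0, t0)) (at (0, t0) within {0..} \<times> UNIV)"
    using continuous_D2psi unfolding continuous_on_def by auto
  then show ?thesis by (rule tendsto_within_subset) auto
qed

lemma psi_rr_tendsto: "(psi_rr \<longlongrightarrow> psi_rr (0, t0)) (at (0, t0) within {0<..} \<times> UNIV)"
  and psi_rt_tendsto: "(psi_rt \<longlongrightarrow> psi_rt (0, t0)) (at (0, t0) within {0<..} \<times> UNIV)"
  and psi_tr_tendsto: "(psi_tr \<longlongrightarrow> psi_tr (0, t0)) (at (0, t0) within {0<..} \<times> UNIV)"
  and psi_tt_tendsto: "(psi_tt \<longlongrightarrow> psi_tt (0, t0)) (at (0, t0) within {0<..} \<times> UNIV)"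
  unfolding psi_rr_def[abs_def] psi_rt_def[abs_def] psi_tr_def[abs_def] psi_tt_def[abs_def]
  by (intro blinfun.tendsto D2psi_tendsto tendsto_const)+

lemma psi_r_tendsto: "(psi_r \<longlongrightarrow> psi_r (0, t0)) (at (0, t0) within {0<..} \<times> UNIV)"
proof -
  have "continuous (at (0, t0) within {0..} \<times> UNIV) Dpsi"
    by (rule has_derivative_continuous[OF has_derivative_Dpsi]) auto
  then have "(Dpsi \<longlongrightarrow> Dpsi (0, t0)) (at (0, t0) within {0..} \<times> UNIV)"
    by (simp add: continuous_within)
  then have "(Dpsi \<longlongrightarrow> Dpsi (0, t0)) (at (0, t0) within {0<..} \<times> UNIV)"
    by (rule tendsto_within_subset) auto
  then show ?thesis unfolding psi_r_def[abs_def] by (intro blinfun.tendsto tendsto_const)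
qed

lemma psi_r_lipschitz_t_near:
  assumes near: "D2psi_close t0 d e"
    and u: "0 \<le> u" "u \<le> r" and t: "dist (r, t) (0, t0) < d" "dist (r, t') (0, t0) < d"
  shows "\<bar>(psi_r (u, t') - t' * psi_rt (0, t0)) - (psi_r (u, t) - t * psi_rt (0, t0))\<bar> \<le> e * \<bar>t' - t\<bar>"
proof -
  let ?b = "psi_rt (0, t0)"
  have "norm ((psi_r (u, t') - t' * ?b) - (psi_r (u, t) - t * ?b)) \<le> e * norm (t' - t)"
  proof (rule field_differentiable_bound[where f' = "\<lambda>s. psi_rt (u, s) - ?b" and S = "closed_segment t t'"])
    show "((\<lambda>s. psi_r (u, s) - s * ?b) has_field_derivative psi_rt (u, s) - ?b) (at s within closed_segment t t')"
      for s using u by (auto intro!: derivative_eq_intros has_field_derivative_at_within[OF psi_r_has_derivative_t])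
    show "norm (psi_rt (u, s) - ?b) \<le> e" if "s \<in> closed_segment t t'" for s
    proof -
      have "dist (u, s) (0, t0) < d" using dist_segment_less[OF u that t] .
      from D2psi_closeD[OF near _ this, of "(0, 1)" "(1, 0)"] u show ?thesis by (simp add: psi_rt_def)
    qed
  qed auto
  then show ?thesis by simp
qed

end

section \<open>Profiles vanishing to second order on the axis\<close>

locale radial_profile = half_plane_C2 +
  assumes psi_0: "\<And>t. \<psi> 0 t = 0"
    and psi_rr_0: "\<And>t. D2psi (0, t) (1, 0) (1, 0) = 0"
begin

lemma psi_t_0: "psi_t (0, t) = 0"
  using psi_has_derivative_t[of 0 t] DERIV_unique[OF _ DERIV_const] by (simp add: psi_0)

lemma psi_tt_0: "psi_tt (0, t) = 0"
  using psi_t_has_derivative_t[of 0 t] DERIV_unique[OF _ DERIV_const] by (simp add: psi_t_0)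

lemma psi_rr_tendsto_0: "(psi_rr \<longlongrightarrow> 0) (at (0, t0) within {0<..} \<times> UNIV)"
  using psi_rr_tendsto by (simp add: psi_rr_def psi_rr_0)

lemma psi_tt_tendsto_0: "(psi_tt \<longlongrightarrow> 0) (at (0, t0) within {0<..} \<times> UNIV)"
  using psi_tt_tendsto by (simp add: psi_tt_0)

lemma psi_sub_r_psi_r_bound:
  assumes near: "D2psi_close t0 d e"
    and r: "0 < r" and rt: "dist (r, t) (0, t0) < d"
  shows "\<bar>\<psi> r t - r * psi_r (r, t)\<bar> \<le> e * r\<^sup>2"
proof -
  have psi_rr_bound: "norm (psi_rr (u, t)) \<le> e" if "u \<in> {0..r}" for u
    using D2psi_closeD[OF near _ dist_shrink_fst_less[OF _ _ rt], of u "(1, 0)" "(1, 0)"] that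
    by (simp add: psi_rr_def psi_rr_0)
  have psi_r_bound: "norm (psi_r (u, t) - psi_r (r, t)) \<le> e * r" if u: "u \<in> {0..r}" for u
  proof -
    have "norm (psi_r (u, t) - psi_r (r, t)) \<le> e * norm (u - r)"
      using u r psi_rr_bound
      by (intro field_differentiable_bound[where f' = "\<lambda>u. psi_rr (u, t)" and S = "{0..r}"])
        (auto intro: DERIV_subset[OF psi_r_has_derivative_r])
    also have "\<dots> \<le> e * r" using u psi_rr_bound[OF u]
      by (intro mult_left_mono) auto
    finally show ?thesis .
  qed
  have "norm ((\<psi> r t - r * psi_r (r, t)) - (\<psi> 0 t - 0 * psi_r (r, t))) \<le> (e * r) * norm (r - 0)"
    using r psi_r_bound
    by (intro field_differentiable_bound[where S = "{0..r}" and f = "\<lambda>u. \<psi> u t - u * psi_r (r, t)"])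
      (auto intro!: derivative_eq_intros DERIV_subset[OF psi_has_derivative_r])
  then show ?thesis using r by (simp add: psi_0 power2_eq_square mult.assoc)
qed

lemma psi_t_sub_r_psi_rt_bound:
  assumes near: "D2psi_close t0 d e"
    and r: "0 < r" and rt: "dist (r, t) (0, t0) < d"
  shows "\<bar>psi_t (r, t) - r * psi_rt (0, t0)\<bar> \<le> e * r"
proof -
  let ?b = "psi_rt (0, t0)"
  have lipschitz: "\<bar>(\<psi> r t' - r * t' * ?b) - (\<psi> r t - r * t * ?b)\<bar> \<le> e * r * \<bar>t' - t\<bar>"
    if t': "dist (r, t') (0, t0) < d" for t'
  proof -
    have "norm ((\<psi> r t' - \<psi> r t - r * (t' - t) * ?b) - (\<psi> 0 t' - \<psi> 0 t - 0 * (t' - t) * ?b))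
        \<le> (e * \<bar>t' - t\<bar>) * norm (r - 0)"
      using r psi_r_lipschitz_t_near[OF near _ _ rt t']
      by (intro field_differentiable_bound[where S = "{0..r}" and f = "\<lambda>u. \<psi> u t' - \<psi> u t - u * (t' - t) * ?b"])
        (auto intro!: derivative_eq_intros DERIV_subset[OF psi_has_derivative_r] simp: algebra_simps)
    then show ?thesis using r by (simp add: psi_0 algebra_simps)
  qed
  show ?thesis
  proof (rule DERIV_abs_le_local_lipschitz[where \<phi> = "\<lambda>s. \<psi> r s - r * s * ?b"])
    show "((\<lambda>s. \<psi> r s - r * s * ?b) has_real_derivative psi_t (r, t) - r * ?b) (at t)"
      using r by (auto intro!: derivative_eq_intros psi_has_derivative_t)
    have "((\<lambda>s. dist (r, s) (0, t0)) \<longlongrightarrow> dist (r, t) (0, t0)) (at t)"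
      by (intro tendsto_intros)
    then have "\<forall>\<^sub>F s in at t. dist (r, s) (0, t0) < d" using rt by (rule order_tendstoD)
    then show "\<forall>\<^sub>F s in at t. \<bar>(\<psi> r s - r * s * ?b) - (\<psi> r t - r * t * ?b)\<bar> \<le> e * r * \<bar>s - t\<bar>"
      by eventually_elim (rule lipschitz)
  qed
qed

definition "phi w = \<psi> (fst w) (snd w) / fst w"
definition "phi_r w = (psi_r w - phi w) / fst w"
definition "phi_t w = psi_t w / fst w"

lemma phi_has_derivative: "0 < fst w \<Longrightarrow> (phi has_derivative (\<lambda>v. phi_r w * fst v + phi_t w * snd v)) (at w)"
  unfolding phi_def[abs_def]
  by (auto intro!: derivative_eq_intros has_derivative_psi_at ext
      simp: Dpsi_apply phi_r_def phi_t_def phi_def field_simps power2_eq_square split_beta')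

lemma phi_r_has_derivative: "0 < fst w \<Longrightarrow> (phi_r has_derivative
    (\<lambda>v. ((psi_rr w - 2 * phi_r w) * fst v + (psi_rt w - phi_t w) * snd v) / fst w)) (at w)"
  unfolding phi_r_def[of, abs_def]
  by (auto intro!: derivative_eq_intros psi_r_has_derivative_at phi_has_derivative ext
      simp: D2psi_apply_r phi_r_def field_simps power2_eq_square split_beta')

lemma phi_t_has_derivative: "0 < fst w \<Longrightarrow> (phi_t has_derivative
    (\<lambda>v. ((psi_tr w - phi_t w) * fst v + psi_tt w * snd v) / fst w)) (at w)"
  unfolding phi_t_def[abs_def]
  by (auto intro!: derivative_eq_intros psi_t_has_derivative_at ext
      simp: D2psi_apply_t phi_t_def field_simps power2_eq_square split_beta')

lemma isCont_phi_r: "0 < fst w \<Longrightarrow> isCont phi_r w"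
  using has_derivative_continuous[OF phi_r_has_derivative] by simp

lemma isCont_phi_t: "0 < fst w \<Longrightarrow> isCont phi_t w"
  using has_derivative_continuous[OF phi_t_has_derivative] by simp

lemma phi_r_tendsto_0: "(phi_r \<longlongrightarrow> 0) (at (0, t0) within {0<..} \<times> UNIV)"
proof (rule tendstoI)
  fix e :: real assume "e > 0"
  then obtain d where "d > 0" and near: "D2psi_close t0 d (e / 2)"
    using D2psi_close_exists[of "e / 2" t0] by auto
  have "dist (phi_r (r, t)) 0 < e" if "0 < r" "dist (r, t) (0, t0) < d" for r t
  proof -
    have "\<bar>\<psi> r t - r * psi_r (r, t)\<bar> \<le> e / 2 * r\<^sup>2" by (rule psi_sub_r_psi_r_bound[OF near that])
    also have "\<dots> < e * r\<^sup>2" using \<open>e > 0\<close> \<open>0 < r\<close> by simp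
    finally have "\<bar>\<psi> r t - r * psi_r (r, t)\<bar> < e * r\<^sup>2" .
    moreover have "dist (phi_r (r, t)) 0 = \<bar>\<psi> r t - r * psi_r (r, t)\<bar> / r\<^sup>2"
      using \<open>0 < r\<close> by (simp add: phi_r_def phi_def field_simps power2_eq_square abs_minus_commute)
    ultimately show ?thesis using \<open>0 < r\<close> by (simp add: pos_divide_less_eq)
  qed
  then show "\<forall>\<^sub>F w in at (0, t0) within {0<..} \<times> UNIV. dist (phi_r w) 0 < e"
    unfolding eventually_at using \<open>d > 0\<close> by (intro exI[of _ d]) auto
qed

lemma phi_t_tendsto: "(phi_t \<longlongrightarrow> psi_rt (0, t0)) (at (0, t0) within {0<..} \<times> UNIV)"
proof (rule tendstoI)
  fix e :: real assume "e > 0"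
  then obtain d where "d > 0" and near: "D2psi_close t0 d (e / 2)"
    using D2psi_close_exists[of "e / 2" t0] by auto
  have "dist (phi_t (r, t)) (psi_rt (0, t0)) < e" if "0 < r" "dist (r, t) (0, t0) < d" for r t
  proof -
    have "\<bar>psi_t (r, t) - r * psi_rt (0, t0)\<bar> \<le> e / 2 * r" by (rule psi_t_sub_r_psi_rt_bound[OF near that])
    also have "\<dots> < e * r" using \<open>e > 0\<close> \<open>0 < r\<close> by simp
    finally have "\<bar>psi_t (r, t) - r * psi_rt (0, t0)\<bar> < e * r" .
    moreover have "dist (phi_t (r, t)) (psi_rt (0, t0)) = \<bar>psi_t (r, t) - r * psi_rt (0, t0)\<bar> / r"
      using \<open>0 < r\<close> by (simp add: phi_t_def dist_real_def field_simps)
    ultimately show ?thesis using \<open>0 < r\<close> by (simp add: pos_divide_less_eq)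
  qed
  then show "\<forall>\<^sub>F w in at (0, t0) within {0<..} \<times> UNIV. dist (phi_t w) (psi_rt (0, t0)) < e"
    unfolding eventually_at using \<open>d > 0\<close> by (intro exI[of _ d]) auto
qed

lemma phi_tendsto: "(phi \<longlongrightarrow> psi_r (0, t0)) (at (0, t0) within {0<..} \<times> UNIV)"
proof -
  have "((\<lambda>w. psi_r w - fst w * phi_r w) \<longlongrightarrow> psi_r (0, t0) - 0 * 0) (at (0, t0) within {0<..} \<times> UNIV)"
    using tendsto_fst[OF tendsto_ident_at[of "(0::real, t0)" "{0<..} \<times> UNIV"]]
    by (intro tendsto_intros psi_r_tendsto phi_r_tendsto_0) auto
  moreover have "\<forall>\<^sub>F w in at (0, t0) within {0<..} \<times> UNIV. psi_r w - fst w * phi_r w = phi w"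
    unfolding eventually_at_filter by (rule always_eventually) (auto simp: phi_r_def)
  ultimately show ?thesis by (auto elim: tendsto_cong[THEN iffD1, rotated])
qed

text \<open>Symmetry of the mixed derivative on the axis: \<open>psi_t (u, t0) / u\<close> tends both to
  \<open>psi_tr (0, t0)\<close> (as \<open>psi_t (0, t0) = 0\<close>) and to \<open>psi_rt (0, t0)\<close> (by \<open>phi_t_tendsto\<close>).\<close>

lemma psi_tr_0_eq_psi_rt_0: "psi_tr (0, t0) = psi_rt (0, t0)"
proof -
  have "((\<lambda>u. (psi_t (u, t0) - psi_t (0, t0)) / (u - 0)) \<longlongrightarrow> psi_tr (0, t0)) (at 0 within {0..})"
    using psi_t_has_derivative_r[of 0 t0] unfolding has_field_derivative_iff by simp
  then have tr: "((\<lambda>u. psi_t (u, t0) / u) \<longlongrightarrow> psi_tr (0, t0)) (at_right 0)"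
    by (simp add: psi_t_0) (rule tendsto_within_subset, auto)
  have "filterlim (\<lambda>u. (u, t0)) (at (0, t0) within {0<..} \<times> UNIV) (at_right 0)"
    by (rule filterlim_at_withinI) (auto intro!: tendsto_eq_intros simp: eventually_at_filter)
  from filterlim_compose[OF phi_t_tendsto this]
  have "((\<lambda>u. psi_t (u, t0) / u) \<longlongrightarrow> psi_rt (0, t0)) (at_right 0)"
    by (simp add: o_def phi_t_def)
  with tr show ?thesis by (rule tendsto_unique[rotated]) simp
qed

lemma psi_tr_tendsto_psi_rt: "(psi_tr \<longlongrightarrow> psi_rt (0, t0)) (at (0, t0) within {0<..} \<times> UNIV)"
  using psi_tr_tendsto psi_tr_0_eq_psi_rt_0 by simp

end

section \<open>The vector field \<open>U\<close>\<close>

type_synonym spacetime = "(real^3) \<times> real"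

context radial_profile
begin

definition polar :: "spacetime \<Rightarrow> real \<times> real" where "polar z = (norm (fst z), snd z)"

abbreviation off_axis :: "spacetime set" where "off_axis \<equiv> {z. fst z \<noteq> 0}"

lemma open_off_axis: "open off_axis"
  by (rule open_Collect_neq) (auto intro: continuous_intros)

lemma polar_fst_pos: "fst z \<noteq> 0 \<Longrightarrow> 0 < fst (polar z)"
  by (simp add: polar_def)

lemma polar_has_derivative: "fst z \<noteq> 0 \<Longrightarrow>
    (polar has_derivative (\<lambda>v. (fst z \<bullet> fst v / norm (fst z), snd v))) (at z)"
  unfolding polar_def[abs_def]
  by (auto intro!: derivative_eq_intros has_derivative_compose[OF _ has_derivative_norm] ext
      simp: sgn_div_norm inner_commute field_simps)

lemma isCont_comp_polar:
  assumes "fst z \<noteq> 0" and "\<And>w. 0 < fst w \<Longrightarrow> isCont f w"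
  shows "isCont (\<lambda>z. f (polar z)) z"
proof (rule isCont_o2)
  show "isCont polar z" unfolding polar_def[abs_def] by (intro continuous_intros)
  show "isCont f (polar z)" using assms by (simp add: polar_fst_pos)
qed

definition "coef_I z = phi (polar z)"
definition "coef_xx z = phi_r (polar z) / norm (fst z)"
definition "coef_xt z = phi_t (polar z)"

lemma coef_I_has_derivative: "fst z \<noteq> 0 \<Longrightarrow> (coef_I has_derivative
    (\<lambda>v. phi_r (polar z) * (fst z \<bullet> fst v / norm (fst z)) + phi_t (polar z) * snd v)) (at z)"
  unfolding coef_I_def[abs_def]
  using has_derivative_compose[OF polar_has_derivative phi_has_derivative[OF polar_fst_pos]] by simp

lemma phi_r_polar_has_derivative: "fst z \<noteq> 0 \<Longrightarrow> ((\<lambda>z. phi_r (polar z)) has_derivative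
    (\<lambda>v. ((psi_rr (polar z) - 2 * phi_r (polar z)) * (fst z \<bullet> fst v / norm (fst z))
          + (psi_rt (polar z) - phi_t (polar z)) * snd v) / norm (fst z))) (at z)"
  using has_derivative_compose[OF polar_has_derivative phi_r_has_derivative[OF polar_fst_pos]]
  by (simp add: polar_def)

lemma coef_xx_has_derivative: "fst z \<noteq> 0 \<Longrightarrow> (coef_xx has_derivative
    (\<lambda>v. ((psi_rr (polar z) - 3 * phi_r (polar z)) * (fst z \<bullet> fst v / norm (fst z))
          + (psi_rt (polar z) - phi_t (polar z)) * snd v) / (norm (fst z))\<^sup>2)) (at z)"
  unfolding coef_xx_def[abs_def]
  by (auto intro!: derivative_eq_intros phi_r_polar_has_derivative
      has_derivative_compose[OF _ has_derivative_norm] ext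
      simp: sgn_div_norm inner_commute field_simps power2_eq_square)

lemma coef_xt_has_derivative: "fst z \<noteq> 0 \<Longrightarrow> (coef_xt has_derivative
    (\<lambda>v. ((psi_tr (polar z) - phi_t (polar z)) * (fst z \<bullet> fst v / norm (fst z))
          + psi_tt (polar z) * snd v) / norm (fst z))) (at z)"
  unfolding coef_xt_def[abs_def]
  using has_derivative_compose[OF polar_has_derivative phi_t_has_derivative[OF polar_fst_pos]]
  by (simp add: polar_def)

definition Ufield :: "spacetime \<Rightarrow> real^3"
  where "Ufield z = (if fst z = 0 then 0 else coef_I z *\<^sub>R fst z)"

lemma Ufield_eq: "Ufield (x, t) = (if x = 0 then 0 else (\<psi> (norm x) t / norm x) *\<^sub>R x)"
  by (simp add: Ufield_def coef_I_def phi_def polar_def)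

definition DU_off :: "spacetime \<Rightarrow> spacetime \<Rightarrow>\<^sub>L (real^3)" where
  "DU_off z = coef_I z *\<^sub>R fst_blinfun + coef_xx z *\<^sub>R fst_outer (fst z) (fst z) + coef_xt z *\<^sub>R snd_outer (fst z)"

definition D2U_off :: "spacetime \<Rightarrow> spacetime \<Rightarrow> spacetime \<Rightarrow>\<^sub>L (real^3)" where
  "D2U_off z v =
     (phi_r (polar z) * (fst z \<bullet> fst v / norm (fst z)) + phi_t (polar z) * snd v) *\<^sub>R fst_blinfun
   + (((psi_rr (polar z) - 3 * phi_r (polar z)) * (fst z \<bullet> fst v / norm (fst z))
       + (psi_rt (polar z) - phi_t (polar z)) * snd v) / (norm (fst z))\<^sup>2) *\<^sub>R fst_outer (fst z) (fst z)
   + coef_xx z *\<^sub>R (fst_outer (fst v) (fst z) + fst_outer (fst z) (fst v))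
   + (((psi_tr (polar z) - phi_t (polar z)) * (fst z \<bullet> fst v / norm (fst z))
       + psi_tt (polar z) * snd v) / norm (fst z)) *\<^sub>R snd_outer (fst z)
   + coef_xt z *\<^sub>R snd_outer (fst v)"

lemma Ufield_has_derivative_off: "fst z \<noteq> 0 \<Longrightarrow> (Ufield has_derivative blinfun_apply (DU_off z)) (at z)"
proof -
  assume z: "fst z \<noteq> 0"
  have "((\<lambda>z. coef_I z *\<^sub>R fst z) has_derivative blinfun_apply (DU_off z)) (at z)"
    using z by (auto intro!: derivative_eq_intros coef_I_has_derivative ext
        simp: DU_off_def coef_xx_def coef_xt_def blinfun.add_left blinfun.scaleR_left algebra_simps inner_commute)
  then show ?thesis
    by (rule has_derivative_transform_within_open[OF _ open_off_axis]) (use z in \<open>auto simp: Ufield_def\<close>)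
qed

lemma DU_off_has_derivative: "fst z \<noteq> 0 \<Longrightarrow> (DU_off has_derivative D2U_off z) (at z)"
  unfolding DU_off_def[abs_def]
  by (rule has_derivative_eq_rhs,
      (rule derivative_eq_intros coef_I_has_derivative coef_xx_has_derivative coef_xt_has_derivative
        bounded_bilinear.FDERIV[OF bounded_bilinear_fst_outer]
        bounded_linear.has_derivative[OF bounded_linear_snd_outer] refl | assumption)+)
    (intro ext blinfun_eqI, simp add: D2U_off_def blinfun.add_left blinfun.scaleR_left
      bounded_bilinear.add_left[OF bounded_bilinear_fst_outer] algebra_simps)

lemma eventually_off_axis: "(\<And>z. fst z \<noteq> 0 \<Longrightarrow> P z) \<Longrightarrow> \<forall>\<^sub>F z in at b within off_axis. P z"
  unfolding eventually_at_filter by (rule always_eventually) auto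

lemma tendsto_polar:
  assumes "(f \<longlongrightarrow> L) (at (0, t0) within {0<..} \<times> UNIV)"
  shows "((\<lambda>z. f (polar z)) \<longlongrightarrow> L) (at (0, t0) within off_axis)"
proof (rule filterlim_compose[OF assms filterlim_at_withinI])
  have "((\<lambda>z. (norm (fst z), snd z)) \<longlongrightarrow> (norm (fst (0::real^3, t0)), snd (0::real^3, t0)))
      (at (0, t0) within off_axis)"
    by (intro tendsto_intros)
  then show "(polar \<longlongrightarrow> (0, t0)) (at (0, t0) within off_axis)"
    by (simp add: polar_def[abs_def])
  show "\<forall>\<^sub>F z in at (0, t0) within off_axis. polar z \<in> {0<..} \<times> UNIV - {(0, t0)}"
    by (rule eventually_off_axis) (simp add: polar_def)
qed

lemma fst_tendsto_0: "((\<lambda>z. fst z) \<longlongrightarrow> 0) (at (0::real^3, t0) within off_axis)"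
  using tendsto_fst[OF tendsto_ident_at[of "(0::real^3, t0)"]] by simp

lemma Ufield_tendsto_axis: "(Ufield \<longlongrightarrow> 0) (at (0, t0) within off_axis)"
proof -
  have "((\<lambda>z. coef_I z *\<^sub>R fst z) \<longlongrightarrow> psi_r (0, t0) *\<^sub>R 0) (at (0, t0) within off_axis)"
    unfolding coef_I_def by (intro tendsto_intros tendsto_polar phi_tendsto fst_tendsto_0)
  moreover have "\<forall>\<^sub>F z in at (0, t0) within off_axis. coef_I z *\<^sub>R fst z = Ufield z"
    by (rule eventually_off_axis) (simp add: Ufield_def)
  ultimately show ?thesis by (auto elim: tendsto_cong[THEN iffD1, rotated])
qed

definition DU :: "spacetime \<Rightarrow> spacetime \<Rightarrow>\<^sub>L (real^3)"
  where "DU z = (if fst z = 0 then psi_r (0, snd z) *\<^sub>R fst_blinfun else DU_off z)"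

lemma DU_off_apply: "fst z \<noteq> 0 \<Longrightarrow> DU_off z v = coef_I z *\<^sub>R fst v
    + (phi_r (polar z) * norm (fst z)) *\<^sub>R ((sgn (fst z) \<bullet> fst v) *\<^sub>R sgn (fst z))
    + (coef_xt z * snd v) *\<^sub>R fst z"
  by (simp add: DU_off_def coef_xx_def sgn_div_norm blinfun.add_left blinfun.scaleR_left
      inner_commute field_simps)

lemma DU_tendsto_axis: "(DU \<longlongrightarrow> DU (0, t0)) (at (0, t0) within off_axis)"
proof (rule tendsto_componentwise1)
  fix v :: "spacetime"
  let ?F = "at (0::real^3, t0) within off_axis"
  have "((\<lambda>z. (phi_r (polar z) * norm (fst z)) *\<^sub>R ((sgn (fst z) \<bullet> fst v) *\<^sub>R sgn (fst z))) \<longlongrightarrow> 0) ?F"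
  proof (rule tendsto_scaleR_zero_bounded)
    show "((\<lambda>z. phi_r (polar z) * norm (fst z)) \<longlongrightarrow> 0) ?F"
      using tendsto_mult[OF tendsto_polar[OF phi_r_tendsto_0] tendsto_norm[OF fst_tendsto_0]] by simp
    show "\<forall>\<^sub>F z in ?F. norm ((sgn (fst z) \<bullet> fst v) *\<^sub>R sgn (fst z)) \<le> norm (fst v)"
      by (rule eventually_off_axis) (simp add: sgn_bounds)
  qed
  then have "((\<lambda>z. coef_I z *\<^sub>R fst v
      + (phi_r (polar z) * norm (fst z)) *\<^sub>R ((sgn (fst z) \<bullet> fst v) *\<^sub>R sgn (fst z))
      + (coef_xt z * snd v) *\<^sub>R fst z) \<longlongrightarrow> psi_r (0, t0) *\<^sub>R fst v + 0 + (psi_rt (0, t0) * snd v) *\<^sub>R 0) ?F"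
    unfolding coef_I_def coef_xt_def
    by (intro tendsto_intros tendsto_polar phi_tendsto phi_t_tendsto fst_tendsto_0)
  moreover have "\<forall>\<^sub>F z in ?F. coef_I z *\<^sub>R fst v
      + (phi_r (polar z) * norm (fst z)) *\<^sub>R ((sgn (fst z) \<bullet> fst v) *\<^sub>R sgn (fst z))
      + (coef_xt z * snd v) *\<^sub>R fst z = DU z v"
    by (rule eventually_off_axis) (simp add: DU_def DU_off_apply)
  ultimately show "((\<lambda>z. DU z v) \<longlongrightarrow> DU (0, t0) v) ?F"
    by (auto simp: DU_def blinfun.scaleR_left elim: tendsto_cong[THEN iffD1, rotated])
qed

lemma Ufield_has_derivative: "(Ufield has_derivative blinfun_apply (DU z)) (at z)"
proof (cases "fst z = 0")
  case False then show ?thesis using Ufield_has_derivative_off[OF False] by (simp add: DU_def)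
next
  case True
  then obtain t0 where z: "z = (0, t0)" by (cases z) auto
  show ?thesis unfolding z
  proof (rule has_derivative_across_hyperplane)
    show "(Ufield has_derivative blinfun_apply (DU z)) (at z)" if "fst z \<noteq> 0" for z
      using Ufield_has_derivative_off[OF that] that by (simp add: DU_def)
    show "(Ufield \<longlongrightarrow> Ufield b) (at b within off_axis)" if "fst b = 0" for b
      using Ufield_tendsto_axis[of "snd b"] that by (cases b) (simp add: Ufield_def)
  qed (simp_all add: DU_tendsto_axis)
qed

lemma bounded_linear_D2U_axis:
  "bounded_linear (\<lambda>v::spacetime. snd_outer fst_blinfun v + snd_outer (fst v))"
  by (intro bounded_linear_add blinfun.bounded_linear_right
      bounded_linear_compose[OF bounded_linear_snd_outer bounded_linear_fst])

definition D2U_axis :: "spacetime \<Rightarrow>\<^sub>L spacetime \<Rightarrow>\<^sub>L (real^3)"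
  where "D2U_axis = Blinfun (\<lambda>v. snd_outer fst_blinfun v + snd_outer (fst v))"

definition D2U :: "spacetime \<Rightarrow> spacetime \<Rightarrow>\<^sub>L spacetime \<Rightarrow>\<^sub>L (real^3)"
  where "D2U z = (if fst z = 0 then psi_rt (0, snd z) *\<^sub>R D2U_axis else Blinfun (D2U_off z))"

lemma D2U_axis_apply: "D2U (0, t) v w = psi_rt (0, t) *\<^sub>R (snd v *\<^sub>R fst w + snd w *\<^sub>R fst v)"
  using bounded_linear_Blinfun_apply[OF bounded_linear_D2U_axis]
  by (simp add: D2U_def D2U_axis_def blinfun.add_left blinfun.scaleR_left scaleR_add_right)

lemma D2U_off_axis: "fst z \<noteq> 0 \<Longrightarrow> blinfun_apply (D2U z) = D2U_off z"
  unfolding D2U_def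
  using bounded_linear_Blinfun_apply[OF has_derivative_bounded_linear[OF DU_off_has_derivative]] by simp

text \<open>The second derivative off the axis in terms of the unit vector \<open>sgn x\<close>: all
  coefficients but the last one tend to \<open>0\<close> at the axis, and all vectors stay bounded.\<close>

lemma D2U_off_apply: "fst z \<noteq> 0 \<Longrightarrow> D2U_off z v w =
      phi_r (polar z) *\<^sub>R ((sgn (fst z) \<bullet> fst v) *\<^sub>R fst w + (fst w \<bullet> fst v) *\<^sub>R sgn (fst z)
                           + (fst w \<bullet> sgn (fst z)) *\<^sub>R fst v)
    + (psi_rr (polar z) - 3 * phi_r (polar z)) *\<^sub>R (((sgn (fst z) \<bullet> fst v) * (fst w \<bullet> sgn (fst z))) *\<^sub>R sgn (fst z))
    + (psi_rt (polar z) - phi_t (polar z)) *\<^sub>R ((snd v * (fst w \<bullet> sgn (fst z))) *\<^sub>R sgn (fst z))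
    + (psi_tr (polar z) - phi_t (polar z)) *\<^sub>R (((sgn (fst z) \<bullet> fst v) * snd w) *\<^sub>R sgn (fst z))
    + psi_tt (polar z) *\<^sub>R ((snd v * snd w) *\<^sub>R sgn (fst z))
    + phi_t (polar z) *\<^sub>R (snd v *\<^sub>R fst w + snd w *\<^sub>R fst v)"
  by (simp add: vec_eq_iff D2U_off_def coef_xx_def coef_xt_def sgn_div_norm blinfun.add_left
      blinfun.scaleR_left inner_commute field_simps power2_eq_square)

lemma tendsto_polar_scaleR_zero:
  assumes "(c \<longlongrightarrow> 0) (at (0, t0) within {0<..} \<times> UNIV)" and "\<And>z. fst z \<noteq> 0 \<Longrightarrow> norm (X z) \<le> K"
  shows "((\<lambda>z. c (polar z) *\<^sub>R X z) \<longlongrightarrow> 0) (at (0, t0) within off_axis)"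
  using assms by (intro tendsto_scaleR_zero_bounded[where K = K] tendsto_polar eventually_off_axis)

lemma D2U_tendsto_axis: "(D2U \<longlongrightarrow> D2U (0, t0)) (at (0, t0) within off_axis)"
proof (intro tendsto_componentwise1)
  fix v w :: spacetime
  let ?F = "at (0::real^3, t0) within off_axis"
  let ?n = "\<lambda>z::spacetime. sgn (fst z)"
  let ?S = "\<lambda>z. phi_r (polar z) *\<^sub>R ((?n z \<bullet> fst v) *\<^sub>R fst w + (fst w \<bullet> fst v) *\<^sub>R ?n z + (fst w \<bullet> ?n z) *\<^sub>R fst v)
      + (psi_rr (polar z) - 3 * phi_r (polar z)) *\<^sub>R (((?n z \<bullet> fst v) * (fst w \<bullet> ?n z)) *\<^sub>R ?n z)
      + (psi_rt (polar z) - phi_t (polar z)) *\<^sub>R ((snd v * (fst w \<bullet> ?n z)) *\<^sub>R ?n z)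
      + (psi_tr (polar z) - phi_t (polar z)) *\<^sub>R (((?n z \<bullet> fst v) * snd w) *\<^sub>R ?n z)
      + psi_tt (polar z) *\<^sub>R ((snd v * snd w) *\<^sub>R ?n z)
      + phi_t (polar z) *\<^sub>R (snd v *\<^sub>R fst w + snd w *\<^sub>R fst v)"
  have "(?S \<longlongrightarrow> 0 + 0 + 0 + 0 + 0 + psi_rt (0, t0) *\<^sub>R (snd v *\<^sub>R fst w + snd w *\<^sub>R fst v)) ?F"
  proof (intro tendsto_add tendsto_scaleR tendsto_const tendsto_polar phi_t_tendsto)
    show "((\<lambda>z. phi_r (polar z) *\<^sub>R ((?n z \<bullet> fst v) *\<^sub>R fst w + (fst w \<bullet> fst v) *\<^sub>R ?n z
        + (fst w \<bullet> ?n z) *\<^sub>R fst v)) \<longlongrightarrow> 0) ?F"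
      by (intro tendsto_polar_scaleR_zero[OF phi_r_tendsto_0, where K = "3 * (norm (fst v) * norm (fst w))"]
          norm_sgn_combination_le)
    show "((\<lambda>z. (psi_rr (polar z) - 3 * phi_r (polar z)) *\<^sub>R (((?n z \<bullet> fst v) * (fst w \<bullet> ?n z)) *\<^sub>R ?n z)) \<longlongrightarrow> 0) ?F"
      using tendsto_diff[OF psi_rr_tendsto_0 tendsto_mult_left[OF phi_r_tendsto_0, of 3]]
      by (intro tendsto_polar_scaleR_zero[where K = "norm (fst v) * norm (fst w)"] norm_scaleR_sgn_le)
        (simp_all add: sgn_bounds)
    show "((\<lambda>z. (psi_rt (polar z) - phi_t (polar z)) *\<^sub>R ((snd v * (fst w \<bullet> ?n z)) *\<^sub>R ?n z)) \<longlongrightarrow> 0) ?F"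
      using tendsto_diff[OF psi_rt_tendsto phi_t_tendsto]
      by (intro tendsto_polar_scaleR_zero[where K = "\<bar>snd v\<bar> * norm (fst w)"] norm_scaleR_sgn_le)
        (simp_all add: sgn_bounds)
    show "((\<lambda>z. (psi_tr (polar z) - phi_t (polar z)) *\<^sub>R (((?n z \<bullet> fst v) * snd w) *\<^sub>R ?n z)) \<longlongrightarrow> 0) ?F"
      using tendsto_diff[OF psi_tr_tendsto_psi_rt phi_t_tendsto]
      by (intro tendsto_polar_scaleR_zero[where K = "norm (fst v) * \<bar>snd w\<bar>"] norm_scaleR_sgn_le)
        (simp_all add: sgn_bounds)
    show "((\<lambda>z. psi_tt (polar z) *\<^sub>R ((snd v * snd w) *\<^sub>R ?n z)) \<longlongrightarrow> 0) ?F"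
      by (intro tendsto_polar_scaleR_zero[OF psi_tt_tendsto_0, where K = "\<bar>snd v\<bar> * \<bar>snd w\<bar>"]
          norm_scaleR_sgn_le) auto
  qed
  moreover have "\<forall>\<^sub>F z in ?F. ?S z = D2U z v w"
    by (rule eventually_off_axis) (simp add: D2U_off_axis D2U_off_apply)
  ultimately show "((\<lambda>z. D2U z v w) \<longlongrightarrow> D2U (0, t0) v w) ?F"
    by (auto simp: D2U_axis_apply elim: tendsto_cong[THEN iffD1, rotated])
qed

lemma isCont_D2U_off: "fst z0 \<noteq> 0 \<Longrightarrow> isCont D2U z0"
  unfolding isCont_def
proof (rule tendsto_componentwise1)
  fix v assume z0: "fst z0 \<noteq> 0"
  have comp: "continuous (at z0) (\<lambda>z. f (polar z))" if "\<And>w. 0 < fst w \<Longrightarrow> isCont f w" for f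
    using isCont_comp_polar[OF z0 that] by simp
  have "continuous (at z0) (\<lambda>z. D2U_off z v)"
    unfolding D2U_off_def[abs_def] coef_xx_def coef_xt_def
    using z0 by (intro continuous_add continuous_scaleR continuous_divide continuous_mult continuous_diff
        continuous_inner continuous_power continuous_norm continuous_fst continuous_ident continuous_const
        comp[OF isCont_phi_r] comp[OF isCont_phi_t] comp[OF isCont_psi_rr] comp[OF isCont_psi_rt]
        comp[OF isCont_psi_tr] comp[OF isCont_psi_tt]
        bounded_bilinear.continuous[OF bounded_bilinear_fst_outer]
        bounded_linear.continuous[OF bounded_linear_snd_outer]) auto
  moreover have "\<forall>\<^sub>F z in at z0. D2U_off z v = D2U z v"
    using open_off_axis z0 unfolding eventually_at_topological by (auto simp: D2U_off_axis)
  ultimately show "((\<lambda>z. D2U z v) \<longlongrightarrow> D2U z0 v) (at z0)"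
    using z0 by (auto simp: isCont_def D2U_off_axis elim: tendsto_cong[THEN iffD1, rotated])
qed

lemma isCont_D2U_axis: "fst z0 = 0 \<Longrightarrow> isCont D2U z0"
proof -
  assume "fst z0 = 0"
  then obtain t0 where z0: "z0 = (0, t0)" by (cases z0) auto
  have "at z0 = sup (at z0 within off_axis) (at z0 within {z. fst z = 0})"
    by (subst at_within_union[symmetric]) (simp add: Un_def)
  moreover have "(D2U \<longlongrightarrow> D2U z0) (at z0 within {z. fst z = 0})"
  proof -
    have "((\<lambda>z. psi_rt (0, snd z) *\<^sub>R D2U_axis) \<longlongrightarrow> psi_rt (0, snd z0) *\<^sub>R D2U_axis) (at z0 within {z. fst z = 0})"
      by (intro tendsto_intros isCont_tendsto_compose[OF isCont_psi_rt_axis])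
    moreover have "\<forall>\<^sub>F z in at z0 within {z. fst z = 0}. psi_rt (0, snd z) *\<^sub>R D2U_axis = D2U z"
      unfolding eventually_at_filter by (rule always_eventually) (auto simp: D2U_def)
    ultimately show ?thesis
      by (auto simp: z0 D2U_def elim: tendsto_cong[THEN iffD1, rotated])
  qed
  ultimately show ?thesis
    unfolding isCont_def using D2U_tendsto_axis[of t0] z0 by (simp add: filterlim_sup)
qed

lemma continuous_D2U: "continuous_on UNIV D2U"
  by (intro continuous_at_imp_continuous_on ballI) (auto intro: isCont_D2U_axis isCont_D2U_off)

lemma DU_has_derivative_off: "fst z \<noteq> 0 \<Longrightarrow> (DU has_derivative blinfun_apply (D2U z)) (at z)"
proof -
  assume z: "fst z \<noteq> 0"
  have "(DU_off has_derivative blinfun_apply (D2U z)) (at z)"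
    using DU_off_has_derivative[OF z] D2U_off_axis[OF z] by simp
  then show ?thesis
    by (rule has_derivative_transform_within_open[OF _ open_off_axis]) (use z in \<open>auto simp: DU_def\<close>)
qed

lemma DU_has_derivative: "(DU has_derivative blinfun_apply (D2U z)) (at z)"
proof (cases "fst z = 0")
  case False then show ?thesis by (rule DU_has_derivative_off)
next
  case True
  then obtain t0 where z: "z = (0, t0)" by (cases z) auto
  show ?thesis unfolding z
  proof (rule has_derivative_across_hyperplane[where F = D2U])
    show "(DU \<longlongrightarrow> DU b) (at b within off_axis)" if "fst b = 0" for b
      using DU_tendsto_axis[of "snd b"] that by (cases b) simp
  qed (simp_all add: DU_has_derivative_off D2U_tendsto_axis)
qed

lemma C2_Ufield: "C2_on UNIV Ufield"
  unfolding C2_on_def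
  by (intro exI[of _ DU] exI[of _ D2U] conjI ballI Ufield_has_derivative DU_has_derivative continuous_D2U)

lemma DU_spatial_symmetric: "DU (y, t) (axis j 1, 0) $ k = DU (y, t) (axis k 1, 0) $ j"
proof -
  have "axis j (1::real) $ k = axis k 1 $ j" by (simp add: axis_def)
  then show ?thesis
    by (cases "y = 0") (auto simp: DU_def DU_off_def coef_xx_def blinfun.add_left blinfun.scaleR_left
        inner_axis inner_axis' ac_simps)
qed

lemma curl_Ufield: "curl (\<lambda>y. Ufield (y, t)) x = 0"
proof (rule curl_eq_0_if_symmetric_derivative)
  have "((\<lambda>y. (y, t)) has_derivative (\<lambda>h. (h, 0))) (at x)"
    by (auto intro!: derivative_eq_intros)
  from has_derivative_compose[OF this Ufield_has_derivative]
  show "((\<lambda>y. Ufield (y, t)) has_derivative (\<lambda>h. DU (x, t) (h, 0))) (at x)" by simp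
qed (rule DU_spatial_symmetric)

lemma curl_curl_Ufield: "curl (curl (\<lambda>y. Ufield (y, t))) x = 0"
proof -
  have "curl (\<lambda>y. Ufield (y, t)) = (\<lambda>y. 0)" using curl_Ufield by auto
  then show ?thesis using curl_eq_0_if_symmetric_derivative[OF has_derivative_const, of 0 x] by simp
qed

lemma vector_derivative_Ufield:
  "vector_derivative (\<lambda>\<tau>. Ufield (x, \<tau>)) (at t) = (psi_t (norm x, t) / norm x) *\<^sub>R x"
proof (cases "x = 0")
  case False
  have "((\<lambda>\<tau>. (\<psi> (norm x) \<tau> / norm x) *\<^sub>R x) has_vector_derivative (psi_t (norm x, t) / norm x) *\<^sub>R x) (at t)"
    using psi_has_derivative_t[of "norm x" t] False
    by (auto intro!: derivative_eq_intros simp: has_real_derivative_iff_has_vector_derivative[symmetric])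
  then show ?thesis using False by (simp add: Ufield_eq vector_derivative_at)
qed (simp add: Ufield_eq)

lemma vector_derivative2_Ufield:
  "vector_derivative (\<lambda>\<tau>. vector_derivative (\<lambda>\<tau>'. Ufield (x, \<tau>')) (at \<tau>)) (at t)
     = (psi_tt (norm x, t) / norm x) *\<^sub>R x"
proof (cases "x = 0")
  case False
  have "((\<lambda>\<tau>. (psi_t (norm x, \<tau>) / norm x) *\<^sub>R x) has_vector_derivative (psi_tt (norm x, t) / norm x) *\<^sub>R x) (at t)"
    using psi_t_has_derivative_t[of "norm x" t] False
    by (auto intro!: derivative_eq_intros simp: has_real_derivative_iff_has_vector_derivative[symmetric])
  then show ?thesis by (simp add: vector_derivative_Ufield vector_derivative_at)
qed (simp add: vector_derivative_Ufield)

text \<open>The field equation for \<open>U\<close> is the radial equation for \<open>\<psi>\<close>, multiplied by the vector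
  \<open>x / |x|\<close>; at \<open>x = 0\<close> both sides vanish (with \<open>0 / 0 = 0\<close>).\<close>

lemma Ufield_equation:
  "a *\<^sub>R vector_derivative (\<lambda>\<tau>. vector_derivative (\<lambda>\<tau>'. Ufield (x, \<tau>')) (at \<tau>)) (at t)
     + curl (curl (\<lambda>y. Ufield (y, t))) x + b *\<^sub>R Ufield (x, t)
     + (c * norm (Ufield (x, t)) powr (p - 1)) *\<^sub>R Ufield (x, t)
   = ((a * psi_tt (norm x, t) + b * \<psi> (norm x) t + c * \<bar>\<psi> (norm x) t\<bar> powr (p - 1) * \<psi> (norm x) t)
       / norm x) *\<^sub>R x"
proof (cases "x = 0")
  case False
  then have "norm (Ufield (x, t)) = \<bar>\<psi> (norm x) t\<bar>" by (simp add: Ufield_eq abs_divide)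
  with False show ?thesis
    by (simp only: vector_derivative2_Ufield curl_curl_Ufield)
      (simp add: Ufield_eq add_divide_distrib scaleR_add_left)
qed (simp only: vector_derivative2_Ufield curl_curl_Ufield, simp add: Ufield_eq)

lemma Ufield_equation_iff:
  assumes "\<And>x. a x = A (norm x)" and "\<And>x. b x = B (norm x)" and "\<And>x. c x = C (norm x)"
  shows "(\<forall>x t. a x *\<^sub>R vector_derivative (\<lambda>\<tau>. vector_derivative (\<lambda>\<tau>'. Ufield (x, \<tau>')) (at \<tau>)) (at t)
              + curl (curl (\<lambda>y. Ufield (y, t))) x + b x *\<^sub>R Ufield (x, t)
              + (c x * norm (Ufield (x, t)) powr (p - 1)) *\<^sub>R Ufield (x, t) = 0)
    \<longleftrightarrow> (\<forall>r t. r \<ge> 0 \<longrightarrow> A r * deriv (\<lambda>\<tau>. deriv (\<lambda>\<tau>'. \<psi> r \<tau>') \<tau>) t + B r * \<psi> r t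
              + C r * \<bar>\<psi> r t\<bar> powr (p - 1) * \<psi> r t = 0)"
proof -
  define E where "E r t = A r * psi_tt (r, t) + B r * \<psi> r t + C r * \<bar>\<psi> r t\<bar> powr (p - 1) * \<psi> r t" for r t
  have "E 0 t = 0" for t by (simp add: E_def psi_0 psi_tt_0)
  from radial_field_eq_0_iff[of E, OF this]
  show ?thesis by (simp add: Ufield_equation assms deriv_deriv_psi flip: E_def)
qed

end


theorem lemma2p2:
  fixes p :: real
    and s q V :: "real^3 \<Rightarrow> real"
    and st qt Vt :: "real \<Rightarrow> real"
    and \<psi> :: "real \<Rightarrow> real \<Rightarrow> real"
    and U :: "real^3 \<Rightarrow> real \<Rightarrow> real^3"
  assumes p: "p > 1"
    and pos: "\<And>x. s x > 0" "\<And>x. q x > 0" "\<And>x. V x > 0"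
    and C2_coeff: "C2_on UNIV s" "C2_on UNIV q" "C2_on UNIV V"
    and rep: "\<And>x. s x = st (norm x)" "\<And>x. q x = qt (norm x)" "\<And>x. V x = Vt (norm x)"
    and psi_C2: "C2_on ({0..} \<times> UNIV) (\<lambda>(r, t). \<psi> r t)"
    and psi_0: "\<And>t. \<psi> 0 t = 0"
    and psi_dd_0: "\<And>t. vector_derivative
                      (\<lambda>r. vector_derivative (\<lambda>\<rho>. \<psi> \<rho> t) (at r within {0..}))
                      (at 0 within {0..}) = 0"
    and U_def: "\<And>x t. U x t = (if x = 0 then 0 else (\<psi> (norm x) t / norm x) *\<^sub>R x)"
  shows "C2_on UNIV (\<lambda>(x, t). U x t) \<and>
    (\<forall>\<sigma>\<in>{1, -1 :: real}.
      (\<forall>x t. s x *\<^sub>R vector_derivative (\<lambda>\<tau>. vector_derivative (\<lambda>\<tau>'. U x \<tau>') (at \<tau>)) (at t)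
             + curl (curl (\<lambda>y. U y t)) x
             + q x *\<^sub>R U x t
             + (\<sigma> * V x * norm (U x t) powr (p - 1)) *\<^sub>R U x t = 0)
      \<longleftrightarrow>
      (\<forall>r t. r \<ge> 0 \<longrightarrow>
             st r * deriv (\<lambda>\<tau>. deriv (\<lambda>\<tau>'. \<psi> r \<tau>') \<tau>) t
             + qt r * \<psi> r t
             + \<sigma> * Vt r * \<bar>\<psi> r t\<bar> powr (p - 1) * \<psi> r t = 0))"
proof -
  obtain Dpsi D2psi where
    "\<forall>z\<in>{0..} \<times> UNIV. ((\<lambda>(r, t). \<psi> r t) has_derivative blinfun_apply (Dpsi z)) (at z within {0..} \<times> UNIV)"
    "\<forall>z\<in>{0..} \<times> UNIV. (Dpsi has_derivative blinfun_apply (D2psi z)) (at z within {0..} \<times> UNIV)"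
    "continuous_on ({0..} \<times> UNIV) D2psi"
    using psi_C2 unfolding C2_on_def by metis
  then interpret half_plane_C2 \<psi> Dpsi D2psi by unfold_locales auto
  interpret radial_profile \<psi> Dpsi D2psi
    using psi_0 psi_dd_0 psi_rr_eq_vector_derivative by unfold_locales (simp_all add: psi_rr_def)
  have U_Ufield: "U = (\<lambda>x t. Ufield (x, t))" by (intro ext) (simp add: U_def Ufield_eq)
  show ?thesis unfolding U_Ufield
    using C2_Ufield by (intro conjI ballI Ufield_equation_iff) (simp_all add: rep)
qed

end
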